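(* Let $M\subseteq\mathbb N$ be infinite, let $\mathcal B$ be a barrier on $M$, and let $f:\mathcal B\to c_0$ be an internal mapping which is bounded, i.e. there is $C$ such that $\|f(s)\|_\infty\le C$ for every $s\in\mathcal B$. Then for every $\varepsilon>0$ there exist an infinite set $N\subseteq M$ and a $U$-mapping $g:\mathcal B\upharpoonright N\to c_{00}$ such that $\|f(s)-g(s)\|_{\ell_1}\le\varepsilon$ for every $s\in\mathcal B\upharpoonright N$.
   Context: $\mathbb N=\{0,1,2,\dots\}$; $\mathrm{FIN}$ is the family of finite subsets of $\mathbb N$. For $X,Y\subseteq\mathbb N$: $X<Y$ means $\max X<\min Y$ (with $\emptyset<X$ and $X<\emptyset$ for all $X$); $X\sqsubseteq Y$ means $X\subseteq Y$ and $X<Y\setminus X$; $X/Y=\{m\in X: m>\max Y\}$. A family $\mathcal B\subseteq\mathrm{FIN}$ is a barrier on $M$ if every member is a subset of $M$, no member is a proper subset of another member, and every infinite $N\subseteq M$ has some $s\in\mathcal B$ with $s\sqsubseteq N$. For a family $\mathcal F$ and $N\subseteq\mathbb N$, $\mathcal F\upharpoonright N=\{s\in\mathcal F: s\subseteq N\}$. For $\xi\in c_0$, $\mathrm{supp}\,\xi=\{i:\xi(i)\ne0\}$; $c_{00}$ denotes finitely supported sequences. A map $f:\mathcal F\to c_0$ ($\mathcal F\subseteq\mathrm{FIN}$) is internal if $\mathrm{supp}\, f(s)\subseteq s$ for all $s\in\mathcal F$; it is uniform if for every $t\in\mathrm{FIN}$ all values $f(s)(\min(s/t))$, for $s\in\mathcal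 F$ with $t\sqsubseteq s$ and $s/t\neq\emptyset$, coincide; a $U$-mapping is an internal uniform mapping. *)

theory Defs
  imports "HOL-Analysis.Analysis"
begin

definition set_less :: "nat set \<Rightarrow> nat set \<Rightarrow> bool" where
  "set_less X Y \<longleftrightarrow> (\<forall>x\<in>X. \<forall>y\<in>Y. x < y)"

definition init_seg :: "nat set \<Rightarrow> nat set \<Rightarrow> bool" where
  "init_seg X Y \<longleftrightarrow> X \<subseteq> Y \<and> set_less X (Y - X)"

definition set_after :: "nat set \<Rightarrow> nat set \<Rightarrow> nat set" where
  "set_after X Y = {m \<in> X. \<forall>y\<in>Y. y < m}"

definition barrier :: "nat set set \<Rightarrow> nat set \<Rightarrow> bool" where
  "barrier B M \<longleftrightarrow>
     (\<forall>s\<in>B. finite s \<and> s \<subseteq> M) \<and>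
     (\<forall>s\<in>B. \<forall>t\<in>B. \<not> (s \<subset> t)) \<and>
     (\<forall>N. N \<subseteq> M \<and> infinite N \<longrightarrow> (\<exists>s\<in>B. init_seg s N))"

definition restr :: "nat set set \<Rightarrow> nat set \<Rightarrow> nat set set" where
  "restr F N = {s \<in> F. s \<subseteq> N}"

definition internal :: "nat set set \<Rightarrow> (nat set \<Rightarrow> nat \<Rightarrow> real) \<Rightarrow> bool" where
  "internal F f \<longleftrightarrow> (\<forall>s\<in>F. {i. f s i \<noteq> 0} \<subseteq> s)"

definition uniform :: "nat set set \<Rightarrow> (nat set \<Rightarrow> nat \<Rightarrow> real) \<Rightarrow> bool" where
  "uniform F f \<longleftrightarrow> (\<forall>t. finite t \<longrightarrow>
     (\<forall>s1\<in>F. \<forall>s2\<in>F. init_seg t s1 \<and> init_seg t s2 \<and>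
        set_after s1 t \<noteq> {} \<and> set_after s2 t \<noteq> {} \<longrightarrow>
        f s1 (Min (set_after s1 t)) = f s2 (Min (set_after s2 t))))"

definition U_mapping :: "nat set set \<Rightarrow> (nat set \<Rightarrow> nat \<Rightarrow> real) \<Rightarrow> bool" where
  "U_mapping F f \<longleftrightarrow> internal F f \<and> uniform F f"

definition l1_norm :: "(nat \<Rightarrow> real) \<Rightarrow> real" where
  "l1_norm x = (\<Sum>i. \<bar>x i\<bar>)"

end

theory Submission
  imports Defs
begin

text \<open>
  Fix a finite set \<open>t\<close>. The members \<open>s\<close> of the barrier that extend \<open>t\<close> properly have tails
  \<open>s - t\<close> forming a thin family, so the bounded values \<open>f s (min (s - t))\<close> can be made constant
  up to any \<open>\<delta> > 0\<close> on the members whose tail lies in a suitable infinite set: colour them by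
  intervals of length \<open>\<delta>\<close> and apply the Nash-Williams partition theorem, itself proved by the
  Galvin-Prikry accept/reject fusion. A diagonal fusion yields one infinite \<open>N \<subseteq> M\<close> that does
  this for all finite \<open>t \<subseteq> N\<close> at once, with \<open>\<delta> t = \<epsilon> / 2^(|t| + 1)\<close>. If \<open>\<phi> t\<close> is the
  approximate value for \<open>t\<close>, then \<open>g s n = \<phi> {x \<in> s. x < n}\<close> for \<open>n \<in> s\<close> is a U-mapping,
  and its error at the \<open>k\<close>-th element of \<open>s\<close> is at most \<open>\<epsilon> / 2^(k + 1)\<close>, which sums to
  at most \<open>\<epsilon>\<close>.
\<close>

lemma set_after_subset: "set_after Q u \<subseteq> Q"
  by (auto simp: set_after_def)

lemma set_after_empty [simp]: "set_after Q {} = Q"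
  by (simp add: set_after_def)

lemma set_after_mono: "Q \<subseteq> Q' \<Longrightarrow> set_after Q u \<subseteq> set_after Q' u"
  by (auto simp: set_after_def)

lemma infinite_set_after:
  assumes "finite u" "infinite Q"
  shows "infinite (set_after Q u)"
proof -
  have "Q - (\<Union>y\<in>u. {..y}) \<subseteq> set_after Q u"
    by (auto simp: set_after_def not_le)
  moreover have "infinite (Q - (\<Union>y\<in>u. {..y}))"
    using assms by (simp add: Diff_infinite_finite)
  ultimately show ?thesis
    using infinite_super by blast
qed

lemma init_seg_Un_set_after: "X \<subseteq> set_after Q u \<Longrightarrow> init_seg u (u \<union> X)"
  unfolding init_seg_def set_less_def set_after_def by auto

lemma init_seg_Un_left: "set_less t v \<Longrightarrow> init_seg u v \<Longrightarrow> init_seg (t \<union> u) (t \<union> v)"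
  unfolding init_seg_def set_less_def by auto

lemma init_seg_common:
  assumes "init_seg u X" "init_seg w X"
  shows "init_seg u w \<or> init_seg w u"
proof -
  have "u \<subseteq> w \<or> w \<subseteq> u"
  proof (rule ccontr)
    assume "\<not> (u \<subseteq> w \<or> w \<subseteq> u)"
    then obtain x y where "x \<in> u" "x \<notin> w" "y \<in> w" "y \<notin> u"
      by auto
    then have "x < y" "y < x"
      using assms unfolding init_seg_def set_less_def by auto
    then show False by simp
  qed
  then show ?thesis
    using assms unfolding init_seg_def set_less_def by auto
qed

lemma set_less_subset: "set_less a A \<Longrightarrow> B \<subseteq> A \<Longrightarrow> set_less a B"
  by (auto simp: set_less_def)

section \<open>Diagonal fusion\<close>

locale dense_hereditary =
  fixes G :: "nat set \<Rightarrow> nat set \<Rightarrow> bool"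
  assumes hereditary: "G a A \<Longrightarrow> B \<subseteq> A \<Longrightarrow> infinite B \<Longrightarrow> G a B"
    and dense: "finite a \<Longrightarrow> infinite A \<Longrightarrow> set_less a A \<Longrightarrow> \<exists>B\<subseteq>A. infinite B \<and> G a B"
begin

lemma refine_finite_family:
  assumes "finite T" "\<forall>t\<in>T. finite t \<and> set_less t P" "infinite P"
  shows "\<exists>B\<subseteq>P. infinite B \<and> (\<forall>t\<in>T. G t B)"
  using assms(1,2)
proof (induction T rule: finite_induct)
  case empty
  then show ?case using \<open>infinite P\<close> by blast
next
  case (insert t T)
  then obtain B where B: "B \<subseteq> P" "infinite B" "\<forall>t\<in>T. G t B"
    by auto
  have "set_less t B"
    using insert.prems B(1) set_less_subset by blast
  then obtain B' where "B' \<subseteq> B" "infinite B'" "G t B'"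
    using dense[of t B] insert.prems B(2) by auto
  then show ?case
    using B hereditary by (metis insert_iff order_trans)
qed

lemma refine_below:
  assumes "infinite C" "set_less {..<p} C"
  shows "\<exists>B\<subseteq>C. infinite B \<and> set_less {..<p} B \<and> (\<forall>t\<subseteq>{..<p}. G t B)"
proof -
  have "\<forall>t\<in>Pow {..<p}. finite t \<and> set_less t C"
    using assms(2) by (auto simp: set_less_def intro: finite_subset[OF _ finite_lessThan])
  then have "\<exists>B\<subseteq>C. infinite B \<and> (\<forall>t\<in>Pow {..<p}. G t B)"
    using assms(1) by (intro refine_finite_family) auto
  then obtain B where "B \<subseteq> C" "infinite B" "\<forall>t\<subseteq>{..<p}. G t B"
    by auto
  then show ?thesis
    using set_less_subset[OF assms(2)] by blast
qed

lemma fusion_sequence: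
  assumes "infinite P"
  obtains B :: "nat \<Rightarrow> nat set" and m :: "nat \<Rightarrow> nat"
  where "decseq B" "strict_mono m" "\<And>k. m k \<in> B k" "\<And>k. B k \<subseteq> P"
    "G {} (B 0)" "\<And>k t. t \<subseteq> {..m k} \<Longrightarrow> G t (B (Suc k))"
proof -
  define good where "good B p \<longleftrightarrow> infinite B \<and> set_less {..<p} B \<and> (\<forall>t\<subseteq>{..<p}. G t B)" for B p
  have refine: "\<exists>B\<subseteq>C. good B p" if "infinite C" "set_less {..<p} C" for p C
    using refine_below[OF that] unfolding good_def by blast
  obtain stage where stage: "\<And>k. good (fst (stage k)) (snd (stage k)) \<and> fst (stage k) \<subseteq> P \<and>
      fst (stage (Suc k)) \<subseteq> fst (stage k) \<and> snd (stage (Suc k)) = Suc (LEAST x. x \<in> fst (stage k))"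
  proof -
    have "\<exists>B\<subseteq>P. good B 0"
      using refine[of P 0] \<open>infinite P\<close> by (simp add: set_less_def)
    moreover have "\<exists>B'\<subseteq>B. good B' (Suc m)" if "good B p" for B p m
    proof -
      have "infinite (set_after B {m})"
        using that by (simp add: good_def infinite_set_after)
      moreover have "set_less {..<Suc m} (set_after B {m})"
        by (auto simp: set_less_def set_after_def)
      ultimately show ?thesis
        using refine set_after_subset by (meson order_trans)
    qed
    ultimately have "\<exists>stage. \<forall>k. (good (fst (stage k)) (snd (stage k)) \<and> fst (stage k) \<subseteq> P) \<and>
        (fst (stage (Suc k)) \<subseteq> fst (stage k) \<and> snd (stage (Suc k)) = Suc (LEAST x. x \<in> fst (stage k)))"
      by (intro dependent_nat_choice) force+
    then show ?thesis
      using that by blast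
  qed
  define B where "B k = fst (stage k)" for k
  define m where "m k = (LEAST x. x \<in> B k)" for k
  have good: "good (B k) (snd (stage k))" and B_subset: "B k \<subseteq> P" for k
    using stage unfolding B_def by auto
  have m_in: "m k \<in> B k" for k
    using good[of k] unfolding good_def m_def by (metis LeastI finite.emptyI ex_in_conv)
  have decseq: "decseq B"
    using stage by (intro decseq_SucI) (simp add: B_def)
  have "m k < m (Suc k)" for k
    using good[of "Suc k"] stage m_in[of "Suc k"] unfolding good_def set_less_def m_def B_def by auto
  then have mono: "strict_mono m"
    by (simp add: strict_mono_Suc_iff)
  have G0: "G {} (B 0)"
    using good[of 0] unfolding good_def by blast
  have G_Suc: "G t (B (Suc k))" if "t \<subseteq> {..m k}" for k t
    using good[of "Suc k"] stage[of k] that unfolding good_def B_def m_def by (simp add: lessThan_Suc_atMost)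
  show ?thesis
    using decseq mono m_in B_subset G0 G_Suc by (rule that)
qed

lemma diagonal_fusion:
  assumes "infinite P"
  shows "\<exists>Q\<subseteq>P. infinite Q \<and> (\<forall>a. finite a \<and> a \<subseteq> Q \<longrightarrow> G a (set_after Q a))"
proof -
  obtain B m where "decseq B" "strict_mono m" "\<And>k. m k \<in> B k" "\<And>k. B k \<subseteq> P"
    and G: "G {} (B 0)" "\<And>k t. t \<subseteq> {..m k} \<Longrightarrow> G t (B (Suc k))"
    using fusion_sequence[OF \<open>infinite P\<close>] by blast
  note B = \<open>decseq B\<close> \<open>\<And>k. B k \<subseteq> P\<close> and m = \<open>strict_mono m\<close> \<open>\<And>k. m k \<in> B k\<close>
  have m_in: "m i \<in> B k" if "k \<le> i" for i k
    using m(2)[of i] decseqD[OF B(1) that] by blast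
  define Q where "Q = range m"
  have infinite: "infinite Q"
    unfolding Q_def using m(1) by (simp add: range_inj_infinite strict_mono_imp_inj_on)
  have "G a (set_after Q a)" if a: "finite a" "a \<subseteq> Q" for a
  proof -
    obtain k where k: "G a (B k)" "set_after Q a \<subseteq> B k"
    proof (cases "a = {}")
      case True
      then show ?thesis
        using that[of 0] G(1) m_in[of 0] by (auto simp: Q_def)
    next
      case False
      then obtain j where j: "Max a = m j"
        using a Max_in Q_def by blast
      have "G a (B (Suc j))"
        using G(2) Max_ge[OF a(1)] j by (simp add: subset_iff)
      moreover have "set_after Q a \<subseteq> B (Suc j)"
      proof
        fix x assume x: "x \<in> set_after Q a"
        then obtain i where i: "x = m i"
          unfolding set_after_def Q_def by blast
        have "m j < m i"
          using x Max_in[OF a(1) False] unfolding i j[symmetric] set_after_def by blast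
        then show "x \<in> B (Suc j)"
          using m_in strict_mono_less[OF m(1)] i by (simp add: Suc_le_eq)
      qed
      ultimately show ?thesis
        using that by blast
    qed
    moreover have "infinite (set_after Q a)"
      using infinite_set_after a(1) infinite by blast
    ultimately show ?thesis
      using hereditary by blast
  qed
  moreover have "Q \<subseteq> P"
    unfolding Q_def using m(2) B(2) by blast
  ultimately show ?thesis
    using infinite by blast
qed

end

section \<open>The Nash-Williams partition theorem\<close>

definition accepts :: "nat set set \<Rightarrow> nat set \<Rightarrow> nat set \<Rightarrow> bool" where
  "accepts F a A \<longleftrightarrow> (\<forall>X. X \<subseteq> A \<and> infinite X \<longrightarrow> (\<exists>u\<in>F. init_seg u (a \<union> X)))"

definition rejects :: "nat set set \<Rightarrow> nat set \<Rightarrow> nat set \<Rightarrow> bool" where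
  "rejects F a A \<longleftrightarrow> (\<forall>B. B \<subseteq> A \<and> infinite B \<longrightarrow> \<not> accepts F a B)"

definition decides :: "nat set set \<Rightarrow> nat set \<Rightarrow> bool" where
  "decides F Q \<longleftrightarrow> (\<forall>a. finite a \<and> a \<subseteq> Q \<longrightarrow> accepts F a (set_after Q a) \<or> rejects F a (set_after Q a))"

lemma accepts_subset: "accepts F a A \<Longrightarrow> B \<subseteq> A \<Longrightarrow> accepts F a B"
  unfolding accepts_def by blast

lemma rejects_subset: "rejects F a A \<Longrightarrow> B \<subseteq> A \<Longrightarrow> rejects F a B"
  unfolding rejects_def by blast

lemma decides_fusion:
  assumes "infinite P"
  shows "\<exists>Q\<subseteq>P. infinite Q \<and> decides F Q"
proof -
  have "dense_hereditary (\<lambda>a A. accepts F a A \<or> rejects F a A)"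
  proof
    show "accepts F a B \<or> rejects F a B"
      if "accepts F a A \<or> rejects F a A" "B \<subseteq> A" for a A B
      using that accepts_subset rejects_subset by blast
    show "\<exists>B\<subseteq>A. infinite B \<and> (accepts F a B \<or> rejects F a B)" if "infinite A" for a A
      using that unfolding rejects_def by blast
  qed
  from dense_hereditary.diagonal_fusion[OF this assms] show ?thesis
    unfolding decides_def by simp
qed

lemma finitely_many_unrejected_extensions:
  assumes "decides F Q"
    and a: "finite a" "a \<subseteq> Q" "rejects F a (set_after Q a)"
  shows "finite {n \<in> set_after Q a. \<not> rejects F (insert n a) (set_after Q (insert n a))}"
    (is "finite ?S")
proof (rule ccontr)
  assume "infinite ?S"
  have "accepts F a ?S"
    unfolding accepts_def
  proof (intro allI impI)
    fix X assume X: "X \<subseteq> ?S \<and> infinite X"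
    define n where "n = (LEAST x. x \<in> X)"
    have "n \<in> X"
      unfolding n_def using X by (metis LeastI finite.emptyI ex_in_conv)
    then have "n \<in> Q" "\<not> rejects F (insert n a) (set_after Q (insert n a))"
      using X set_after_subset by blast+
    then have "accepts F (insert n a) (set_after Q (insert n a))"
      using assms(1) a(1,2) unfolding decides_def by auto
    moreover have "X - {n} \<subseteq> set_after Q (insert n a)"
    proof
      fix x assume x: "x \<in> X - {n}"
      then have "x \<in> set_after Q a" "n \<le> x"
        using X Least_le[of "\<lambda>x. x \<in> X"] unfolding n_def by auto
      then show "x \<in> set_after Q (insert n a)"
        using x unfolding set_after_def by auto
    qed
    moreover have "infinite (X - {n})"
      using X by simp
    ultimately obtain u where "u \<in> F" "init_seg u (insert n a \<union> (X - {n}))"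
      unfolding accepts_def by blast
    moreover have "insert n a \<union> (X - {n}) = a \<union> X"
      using \<open>n \<in> X\<close> by auto
    ultimately show "\<exists>u\<in>F. init_seg u (a \<union> X)"
      by auto
  qed
  moreover have "?S \<subseteq> set_after Q a"
    by blast
  ultimately show False
    using a(3) \<open>infinite ?S\<close> unfolding rejects_def by blast
qed

lemma rejecting_fusion:
  assumes "decides F Q"
    and "rejects F {} Q" "infinite Q"
  shows "\<exists>R\<subseteq>Q. infinite R \<and> (\<forall>a. finite a \<and> a \<subseteq> R \<longrightarrow> rejects F a (set_after Q a))"
proof -
  define G where "G a A \<longleftrightarrow> (a \<subseteq> Q \<and> rejects F a (set_after Q a) \<longrightarrow>
      (\<forall>n\<in>A \<inter> Q. rejects F (insert n a) (set_after Q (insert n a))))" for a A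
  have "dense_hereditary G"
  proof
    show "G a B" if "G a A" "B \<subseteq> A" for a A B
      using that unfolding G_def by blast
    show "\<exists>B\<subseteq>A. infinite B \<and> G a B" if "finite a" "infinite A" "set_less a A" for a A
    proof (cases "a \<subseteq> Q \<and> rejects F a (set_after Q a)")
      case True
      let ?S = "{n \<in> set_after Q a. \<not> rejects F (insert n a) (set_after Q (insert n a))}"
      have "finite ?S"
        using finitely_many_unrejected_extensions[OF assms(1)] that(1) True by blast
      then have "infinite (A - ?S)"
        using that(2) by (simp add: Diff_infinite_finite)
      moreover have "G a (A - ?S)"
        using that(3) unfolding G_def set_less_def set_after_def by blast
      ultimately show ?thesis by blast
    qed (use that in \<open>auto simp: G_def\<close>)
  qed
  from dense_hereditary.diagonal_fusion[OF this assms(3)]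
  obtain R where R: "R \<subseteq> Q" "infinite R" "\<And>a. finite a \<Longrightarrow> a \<subseteq> R \<Longrightarrow> G a (set_after R a)"
    by blast
  have "a \<subseteq> R \<longrightarrow> rejects F a (set_after Q a)" if "finite a" for a
    using that
  proof (induction a rule: finite_linorder_max_induct)
    case empty
    then show ?case using assms(2) by simp
  next
    case (insert b a)
    show ?case
    proof
      assume ba: "insert b a \<subseteq> R"
      then have "b \<in> set_after R a \<inter> Q"
        using insert.hyps(2) R(1) unfolding set_after_def by auto
      then show "rejects F (insert b a) (set_after Q (insert b a))"
        using insert R(1,3) ba unfolding G_def by blast
    qed
  qed
  then show ?thesis
    using R(1,2) by blast
qed

theorem nash_williams:
  assumes "\<forall>u\<in>F. finite u" "infinite P"
  shows "\<exists>Q\<subseteq>P. infinite Q \<and> ((\<forall>u\<in>F. \<not> u \<subseteq> Q) \<or>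
           (\<forall>X. X \<subseteq> Q \<and> infinite X \<longrightarrow> (\<exists>u\<in>F. init_seg u X)))"
proof -
  obtain Q where Q: "Q \<subseteq> P" "infinite Q"
    and "decides F Q"
    using decides_fusion[OF assms(2)] by blast
  show ?thesis
  proof (cases "accepts F {} Q")
    case True
    then have "\<forall>X. X \<subseteq> Q \<and> infinite X \<longrightarrow> (\<exists>u\<in>F. init_seg u X)"
      by (simp add: accepts_def)
    then show ?thesis
      using Q by blast
  next
    case False
    then have "rejects F {} Q"
      using \<open>decides F Q\<close>[unfolded decides_def, rule_format, of "{}"] by simp
    then obtain R where R: "R \<subseteq> Q" "infinite R"
      and rejects: "\<And>a. finite a \<Longrightarrow> a \<subseteq> R \<Longrightarrow> rejects F a (set_after Q a)"
      using rejecting_fusion[OF \<open>decides F Q\<close> _ Q(2)] by blast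
    have "\<not> u \<subseteq> R" if "u \<in> F" for u
    proof
      assume "u \<subseteq> R"
      then have "rejects F u (set_after R u)"
        using rejects[of u] assms(1) that rejects_subset set_after_mono[OF R(1)] by blast
      moreover have "infinite (set_after R u)"
        using infinite_set_after assms(1) that R(2) by blast
      moreover have "accepts F u (set_after R u)"
        unfolding accepts_def using that init_seg_Un_set_after by blast
      ultimately show False
        unfolding rejects_def by blast
    qed
    then show ?thesis
      using Q R by blast
  qed
qed

definition thin :: "nat set set \<Rightarrow> bool" where
  "thin F \<longleftrightarrow> (\<forall>u\<in>F. finite u) \<and> (\<forall>u\<in>F. \<forall>v\<in>F. init_seg u v \<longrightarrow> u = v)"

lemma thin_finite: "thin F \<Longrightarrow> u \<in> F \<Longrightarrow> finite u"
  unfolding thin_def by simp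

lemma thin_init_seg_eq: "thin F \<Longrightarrow> u \<in> F \<Longrightarrow> v \<in> F \<Longrightarrow> init_seg u v \<Longrightarrow> u = v"
  unfolding thin_def by simp

lemma thin_subset: "thin F \<Longrightarrow> E \<subseteq> F \<Longrightarrow> thin E"
  unfolding thin_def by (meson subsetD)

lemma barrier_imp_thin:
  assumes "barrier B M"
  shows "thin B"
proof -
  have "\<forall>u\<in>B. finite u" "\<forall>u\<in>B. \<forall>v\<in>B. \<not> u \<subset> v"
    using assms unfolding barrier_def by auto
  moreover have "u \<subseteq> v" if "init_seg u v" for u v
    using that unfolding init_seg_def by simp
  ultimately show ?thesis
    unfolding thin_def by blast
qed

lemma thin_mem_covering_subfamily:
  assumes "thin E" "F \<subseteq> E" "\<forall>X. X \<subseteq> Q \<and> infinite X \<longrightarrow> (\<exists>w\<in>F. init_seg w X)"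
    and "infinite Q" "u \<in> E" "u \<subseteq> Q"
  shows "u \<in> F"
proof -
  define X where "X = u \<union> set_after Q u"
  have "X \<subseteq> Q"
    unfolding X_def using assms(6) set_after_subset by blast
  moreover have "infinite X"
    unfolding X_def using infinite_set_after[OF thin_finite[OF assms(1,5)] assms(4)] by simp
  ultimately obtain w where w: "w \<in> F" "init_seg w X"
    using assms(3) by blast
  have "init_seg u X"
    unfolding X_def by (rule init_seg_Un_set_after[of _ Q]) simp
  then have "init_seg w u \<or> init_seg u w"
    using init_seg_common[OF w(2)] by simp
  then have "w = u"
    using thin_init_seg_eq[OF assms(1)] assms(2,5) w(1) by (metis subsetD)
  then show ?thesis
    using w(1) by simp
qed

theorem thin_colouring_homogeneous:
  fixes c :: "nat set \<Rightarrow> nat"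
  assumes "thin E" "\<forall>u\<in>E. c u < m" "infinite P"
  shows "\<exists>Q\<subseteq>P. infinite Q \<and> (\<forall>u\<in>E. \<forall>v\<in>E. u \<subseteq> Q \<and> v \<subseteq> Q \<longrightarrow> c u = c v)"
  using assms
proof (induction m arbitrary: E P)
  case 0
  then have "E = {}"
    by simp
  then show ?case
    using "0.prems"(3) by blast
next
  case (Suc m)
  have fin: "finite u" if "u \<in> E" for u
    using Suc.prems(1) that by (rule thin_finite)
  define F where "F = {u\<in>E. c u = m}"
  have "\<forall>u\<in>F. finite u"
    using fin unfolding F_def by simp
  from nash_williams[OF this Suc.prems(3)] obtain Q where Q: "Q \<subseteq> P" "infinite Q"
    and alternatives: "(\<forall>u\<in>F. \<not> u \<subseteq> Q) \<or> (\<forall>X. X \<subseteq> Q \<and> infinite X \<longrightarrow> (\<exists>u\<in>F. init_seg u X))"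
    by blast
  show ?case
  proof (cases "\<forall>u\<in>F. \<not> u \<subseteq> Q")
    case True
    define E' where "E' = {u\<in>E. c u \<noteq> m}"
    have "thin E'"
      using Suc.prems(1) by (rule thin_subset) (auto simp: E'_def)
    moreover have "\<forall>u\<in>E'. c u < m"
      using Suc.prems(2) unfolding E'_def by fastforce
    ultimately have "\<exists>Q'\<subseteq>Q. infinite Q' \<and> (\<forall>u\<in>E'. \<forall>v\<in>E'. u \<subseteq> Q' \<and> v \<subseteq> Q' \<longrightarrow> c u = c v)"
      using Q(2) by (rule Suc.IH)
    then obtain Q' where Q': "Q' \<subseteq> Q" "infinite Q'"
      and homogeneous: "\<forall>u\<in>E'. \<forall>v\<in>E'. u \<subseteq> Q' \<and> v \<subseteq> Q' \<longrightarrow> c u = c v"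
      by metis
    have in_E': "u \<in> E'" if "u \<in> E" "u \<subseteq> Q'" for u
      using True Q'(1) that unfolding E'_def F_def by auto
    have "\<forall>u\<in>E. \<forall>v\<in>E. u \<subseteq> Q' \<and> v \<subseteq> Q' \<longrightarrow> c u = c v"
      using homogeneous in_E' by simp
    moreover have "Q' \<subseteq> P"
      using Q'(1) Q(1) by (rule order_trans)
    ultimately show ?thesis
      using Q'(2) by metis
  next
    case False
    then have covering: "\<forall>X. X \<subseteq> Q \<and> infinite X \<longrightarrow> (\<exists>u\<in>F. init_seg u X)"
      using alternatives by blast
    have "F \<subseteq> E"
      unfolding F_def by blast
    then have "u \<in> F" if "u \<in> E" "u \<subseteq> Q" for u
      using thin_mem_covering_subfamily[OF Suc.prems(1) _ covering Q(2) that] by blast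
    then have "\<forall>u\<in>E. \<forall>v\<in>E. u \<subseteq> Q \<and> v \<subseteq> Q \<longrightarrow> c u = c v"
      unfolding F_def by simp
    then show ?thesis
      using Q by metis
  qed
qed

lemma floor_eq_imp_abs_diff_less: "\<lfloor>x\<rfloor> = \<lfloor>y\<rfloor> \<Longrightarrow> \<bar>x - y\<bar> < (1::real)"
  by linarith

theorem thin_bounded_almost_constant:
  assumes "thin E" and bound: "\<forall>u\<in>E. \<bar>h u\<bar> \<le> C" and "(\<delta>::real) > 0" "infinite P"
  shows "\<exists>Q\<subseteq>P. infinite Q \<and> (\<exists>a. \<forall>u\<in>E. u \<subseteq> Q \<longrightarrow> \<bar>h u - a\<bar> \<le> \<delta>)"
proof -
  define level where "level u = \<lfloor>(h u + C) / \<delta>\<rfloor>" for u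
  have level_bounds: "0 \<le> level u" "level u \<le> \<lfloor>2 * C / \<delta>\<rfloor>" if "u \<in> E" for u
    using bound that \<open>\<delta> > 0\<close> unfolding level_def
    by (auto intro!: floor_mono divide_right_mono simp: abs_le_iff)
  then have "\<forall>u\<in>E. nat (level u) < Suc (nat \<lfloor>2 * C / \<delta>\<rfloor>)"
    by (meson le_imp_less_Suc nat_mono)
  from thin_colouring_homogeneous[OF assms(1) this assms(4)]
  obtain Q where Q: "Q \<subseteq> P" "infinite Q"
    and homogeneous: "\<forall>u\<in>E. \<forall>v\<in>E. u \<subseteq> Q \<and> v \<subseteq> Q \<longrightarrow> nat (level u) = nat (level v)"
    by metis
  show ?thesis
  proof (cases "\<exists>u0\<in>E. u0 \<subseteq> Q")
    case False
    then show ?thesis using Q by blast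
  next
    case True
    then obtain u0 where u0: "u0 \<in> E" "u0 \<subseteq> Q" by blast
    have "\<bar>h u - h u0\<bar> \<le> \<delta>" if u: "u \<in> E" "u \<subseteq> Q" for u
    proof -
      have "level u = level u0"
        using homogeneous u u0 level_bounds(1) by (metis nat_eq_iff2)
      then have "\<bar>(h u + C) / \<delta> - (h u0 + C) / \<delta>\<bar> < 1"
        unfolding level_def by (rule floor_eq_imp_abs_diff_less)
      then show ?thesis
        using \<open>\<delta> > 0\<close> by (simp add: diff_divide_distrib[symmetric] abs_divide)
    qed
    then show ?thesis
      using Q by blast
  qed
qed

section \<open>Approximation by U-mappings\<close>

lemma prefix_split:
  assumes "finite s" "n \<in> s" "{x\<in>s. x < n} = t"
  shows "t \<union> (s - t) = s" "Min (s - t) = n" "set_less t (s - t)"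
proof -
  have "s - t = {x\<in>s. n \<le> x}"
    using assms(3) by auto
  then show "Min (s - t) = n"
    using assms(1,2) by (intro Min_eqI) auto
  show "t \<union> (s - t) = s" "set_less t (s - t)"
    using assms(3) unfolding set_less_def by auto
qed

lemma thin_tails:
  assumes "thin B"
  shows "thin ((\<lambda>s. s - t) ` {s\<in>B. \<exists>n\<in>s. {x\<in>s. x < n} = t})"
  unfolding thin_def
proof (intro conjI ballI impI)
  fix u assume "u \<in> (\<lambda>s. s - t) ` {s\<in>B. \<exists>n\<in>s. {x\<in>s. x < n} = t}"
  then show "finite u"
    using thin_finite[OF assms] by auto
next
  fix u v
  assume "u \<in> (\<lambda>s. s - t) ` {s\<in>B. \<exists>n\<in>s. {x\<in>s. x < n} = t}"
    and "v \<in> (\<lambda>s. s - t) ` {s\<in>B. \<exists>n\<in>s. {x\<in>s. x < n} = t}" and "init_seg u v"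
  then obtain s1 s2 n1 n2 where s: "s1 \<in> B" "n1 \<in> s1" "{x\<in>s1. x < n1} = t" "u = s1 - t"
    "s2 \<in> B" "n2 \<in> s2" "{x\<in>s2. x < n2} = t" "v = s2 - t"
    by auto
  note split1 = prefix_split[OF thin_finite[OF assms s(1)] s(2,3)]
    and split2 = prefix_split[OF thin_finite[OF assms s(5)] s(6,7)]
  have "set_less t v"
    using split2(3) s(8) by simp
  then have "init_seg (t \<union> u) (t \<union> v)"
    using \<open>init_seg u v\<close> by (rule init_seg_Un_left)
  moreover have "t \<union> u = s1" "t \<union> v = s2"
    using split1(1) split2(1) s(4,8) by simp_all
  ultimately have "s1 = s2"
    using thin_init_seg_eq[OF assms s(1,5)] by simp
  then show "u = v"
    using s(4,8) by simp
qed

lemma value_after_prefix_almost_constant: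
  assumes "thin B" and bound: "\<forall>s\<in>B. \<forall>i. \<bar>f s i\<bar> \<le> C" and "(\<delta>::real) > 0" "infinite A"
  shows "\<exists>Q\<subseteq>A. infinite Q \<and>
    (\<exists>a. \<forall>s\<in>B. \<forall>n\<in>s. {x\<in>s. x < n} = t \<and> s - t \<subseteq> Q \<longrightarrow> \<bar>f s n - a\<bar> \<le> \<delta>)"
proof -
  define E where "E = (\<lambda>s. s - t) ` {s\<in>B. \<exists>n\<in>s. {x\<in>s. x < n} = t}"
  define h where "h u = f (t \<union> u) (Min u)" for u
  have split: "t \<union> (s - t) = s" "Min (s - t) = n"
    if "s \<in> B" "n \<in> s" "{x\<in>s. x < n} = t" for s n
    using prefix_split[OF thin_finite[OF assms(1) that(1)] that(2,3)] by simp_all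
  have h_bound: "\<forall>u\<in>E. \<bar>h u\<bar> \<le> C"
  proof
    fix u assume "u \<in> E"
    then obtain s n where s: "s \<in> B" "n \<in> s" "{x\<in>s. x < n} = t" "u = s - t"
      unfolding E_def by auto
    then show "\<bar>h u\<bar> \<le> C"
      using bound split(1)[OF s(1-3)] unfolding h_def by simp
  qed
  have "thin E"
    unfolding E_def by (rule thin_tails[OF assms(1)])
  from thin_bounded_almost_constant[OF this h_bound assms(3,4)]
  obtain Q a where Q: "Q \<subseteq> A" "infinite Q" and a: "\<forall>u\<in>E. u \<subseteq> Q \<longrightarrow> \<bar>h u - a\<bar> \<le> \<delta>"
    by blast
  have "\<bar>f s n - a\<bar> \<le> \<delta>" if "s \<in> B" "n \<in> s" "{x\<in>s. x < n} = t" "s - t \<subseteq> Q" for s n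
  proof -
    have "s - t \<in> E"
      unfolding E_def by (rule imageI) (use that(1-3) in \<open>simp add: bexI[of _ n]\<close>)
    then have "\<bar>h (s - t) - a\<bar> \<le> \<delta>"
      using a that(4) by simp
    then show ?thesis
      unfolding h_def using split[OF that(1-3)] by simp
  qed
  then show ?thesis
    using Q by metis
qed

lemma prefix_approximation:
  assumes "thin B" "\<forall>s\<in>B. \<forall>i. \<bar>f s i\<bar> \<le> C" "\<And>t. \<delta> t > (0::real)" "infinite M"
  shows "\<exists>N\<subseteq>M. infinite N \<and>
    (\<exists>\<phi>. \<forall>s\<in>restr B N. \<forall>n\<in>s. \<bar>f s n - \<phi> {x\<in>s. x < n}\<bar> \<le> \<delta> {x\<in>s. x < n})"
proof -
  define G where "G t A \<longleftrightarrow>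
    (\<exists>a. \<forall>s\<in>B. \<forall>n\<in>s. {x\<in>s. x < n} = t \<and> s - t \<subseteq> A \<longrightarrow> \<bar>f s n - a\<bar> \<le> \<delta> t)" for t A
  have "dense_hereditary G"
  proof
    show "G t A'" if "G t A" "A' \<subseteq> A" for t A A'
      using that unfolding G_def by (meson order_trans)
    show "\<exists>A'\<subseteq>A. infinite A' \<and> G t A'" if "infinite A" for t A
      unfolding G_def using assms(1,2) assms(3)[of t] that by (rule value_after_prefix_almost_constant)
  qed
  from dense_hereditary.diagonal_fusion[OF this assms(4)]
  obtain N where N: "N \<subseteq> M" "infinite N"
    and tails: "\<And>t. finite t \<Longrightarrow> t \<subseteq> N \<Longrightarrow> G t (set_after N t)"
    by blast
  define \<phi> where "\<phi> t = (SOME a. \<forall>s\<in>B. \<forall>n\<in>s.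
      {x\<in>s. x < n} = t \<and> s - t \<subseteq> set_after N t \<longrightarrow> \<bar>f s n - a\<bar> \<le> \<delta> t)" for t
  have \<phi>: "\<forall>s\<in>B. \<forall>n\<in>s. {x\<in>s. x < n} = t \<and> s - t \<subseteq> set_after N t \<longrightarrow> \<bar>f s n - \<phi> t\<bar> \<le> \<delta> t"
    if "finite t" "t \<subseteq> N" for t
    using tails[OF that] unfolding G_def \<phi>_def by (rule someI_ex)
  have "\<bar>f s n - \<phi> {x\<in>s. x < n}\<bar> \<le> \<delta> {x\<in>s. x < n}" if "s \<in> restr B N" "n \<in> s" for s n
  proof -
    have "s \<in> B" "s \<subseteq> N"
      using that(1) unfolding restr_def by auto
    moreover from this have "finite {x\<in>s. x < n}" "{x\<in>s. x < n} \<subseteq> N"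
      using thin_finite[OF assms(1)] by auto
    moreover have "s - {x\<in>s. x < n} \<subseteq> set_after N {x\<in>s. x < n}"
      using \<open>s \<subseteq> N\<close> unfolding set_after_def by auto
    ultimately show ?thesis
      using \<phi> that(2) by blast
  qed
  then show ?thesis
    using N by metis
qed

definition prefix_map :: "(nat set \<Rightarrow> real) \<Rightarrow> nat set \<Rightarrow> nat \<Rightarrow> real" where
  "prefix_map \<phi> s i = (if i \<in> s then \<phi> {x\<in>s. x < i} else 0)"

lemma prefix_below_Min_set_after:
  assumes "finite s" "init_seg t s" "set_after s t \<noteq> {}"
  shows "Min (set_after s t) \<in> s" "{x\<in>s. x < Min (set_after s t)} = t"
proof -
  have finite: "finite (set_after s t)"
    using assms(1) set_after_subset finite_subset by blast
  then show "Min (set_after s t) \<in> s"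
    using Min_in assms(3) set_after_subset by blast
  have "t \<subseteq> s" "set_less t (s - t)"
    using assms(2) unfolding init_seg_def by auto
  moreover have "set_after s t = s - t"
    using assms(2) unfolding init_seg_def set_less_def set_after_def by auto
  ultimately show "{x\<in>s. x < Min (set_after s t)} = t"
    using finite assms(3) Min_in[OF finite assms(3)] unfolding set_less_def
    by (auto simp: Min_le_iff)
qed

lemma U_mapping_prefix_map:
  assumes "\<forall>s\<in>F. finite s"
  shows "U_mapping F (prefix_map \<phi>)"
  unfolding U_mapping_def
proof
  show "internal F (prefix_map \<phi>)"
    unfolding internal_def prefix_map_def by auto
  show "uniform F (prefix_map \<phi>)"
    unfolding uniform_def prefix_map_def
    using prefix_below_Min_set_after assms by simp
qed

lemma finite_support_prefix_map: "finite s \<Longrightarrow> finite {i. prefix_map \<phi> s i \<noteq> 0}"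
  by (rule finite_subset[of _ s]) (auto simp: prefix_map_def)

lemma sum_half_power_rank:
  fixes s :: "nat set"
  assumes "finite s"
  shows "(\<Sum>i\<in>s. (1/2::real) ^ Suc (card {x\<in>s. x < i})) = 1 - (1/2) ^ card s"
  using assms
proof (induction s rule: finite_linorder_max_induct)
  case empty
  then show ?case by simp
next
  case (insert b s)
  have "{x \<in> insert b s. x < i} = {x\<in>s. x < i}" if "i \<in> s" for i
    using insert.hyps(2) that by auto
  moreover have "{x \<in> insert b s. x < b} = s"
    using insert.hyps(2) by auto
  moreover have "b \<notin> s"
    using insert.hyps(2) by auto
  ultimately show ?case
    using insert by (simp add: algebra_simps)
qed

lemma l1_norm_le_rank_weighted:
  assumes "finite s" "\<And>i. i \<notin> s \<Longrightarrow> x i = 0"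
    and "\<And>i. i \<in> s \<Longrightarrow> \<bar>x i\<bar> \<le> \<epsilon> * (1/2) ^ Suc (card {j\<in>s. j < i})" "0 \<le> \<epsilon>"
  shows "l1_norm x \<le> \<epsilon>"
proof -
  have "l1_norm x = (\<Sum>i\<in>s. \<bar>x i\<bar>)"
    unfolding l1_norm_def using assms(1,2) by (intro suminf_finite) auto
  also have "\<dots> \<le> (\<Sum>i\<in>s. \<epsilon> * (1/2) ^ Suc (card {j\<in>s. j < i}))"
    using assms(3) by (rule sum_mono)
  also have "\<dots> = \<epsilon> * (\<Sum>i\<in>s. (1/2) ^ Suc (card {j\<in>s. j < i}))"
    by (rule sum_distrib_left[symmetric])
  also have "\<dots> = \<epsilon> * (1 - (1/2) ^ card s)"
    by (simp only: sum_half_power_rank[OF assms(1)])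
  also have "\<dots> \<le> \<epsilon>"
    using assms(4) by (simp add: mult_left_le)
  finally show ?thesis .
qed

theorem mainTheorem1:
  fixes M :: "nat set" and B :: "nat set set" and f :: "nat set \<Rightarrow> nat \<Rightarrow> real"
    and \<epsilon> :: real
  assumes "infinite M"
    and "barrier B M"
    and "\<forall>s\<in>B. f s \<longlonglongrightarrow> 0"
    and "internal B f"
    and "\<exists>C. \<forall>s\<in>B. \<forall>i. \<bar>f s i\<bar> \<le> C"
    and "\<epsilon> > 0"
  shows "\<exists>N g. infinite N \<and> N \<subseteq> M \<and> U_mapping (restr B N) g \<and>
           (\<forall>s\<in>restr B N. finite {i. g s i \<noteq> 0}) \<and>
           (\<forall>s\<in>restr B N. l1_norm (\<lambda>i. f s i - g s i) \<le> \<epsilon>)"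
proof -
  have "thin B"
    using assms(2) by (rule barrier_imp_thin)
  obtain C where "\<forall>s\<in>B. \<forall>i. \<bar>f s i\<bar> \<le> C"
    using assms(5) by blast
  from prefix_approximation[OF \<open>thin B\<close> this _ assms(1), of "\<lambda>t. \<epsilon> * (1/2) ^ Suc (card t)"]
  obtain N \<phi> where N: "N \<subseteq> M" "infinite N" and approx:
    "\<forall>s\<in>restr B N. \<forall>n\<in>s. \<bar>f s n - \<phi> {x\<in>s. x < n}\<bar> \<le> \<epsilon> * (1/2) ^ Suc (card {x\<in>s. x < n})"
    using assms(6) by auto
  have finite: "\<forall>s\<in>restr B N. finite s"
    using thin_finite[OF \<open>thin B\<close>] unfolding restr_def by auto
  have "l1_norm (\<lambda>i. f s i - prefix_map \<phi> s i) \<le> \<epsilon>" if s: "s \<in> restr B N" for s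
  proof (rule l1_norm_le_rank_weighted)
    show "finite s"
      using finite s by blast
    show "f s i - prefix_map \<phi> s i = 0" if "i \<notin> s" for i
      using assms(4) s that unfolding internal_def restr_def prefix_map_def by auto
    show "\<bar>f s i - prefix_map \<phi> s i\<bar> \<le> \<epsilon> * (1/2) ^ Suc (card {j\<in>s. j < i})" if "i \<in> s" for i
      using approx s that unfolding prefix_map_def by simp
  qed (use assms(6) in simp)
  then show ?thesis
    using N U_mapping_prefix_map[OF finite] finite finite_support_prefix_map by metis
qed

end
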